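(* Let $k>4$ be an odd integer. Assume that when the procedure $\mathrm{Permutations}$ is run on a list of $k$ pairwise distinct elements $(x_0,x_1,\dots,x_{k-1})$ (i.e. $\mathrm{Permutations}(L,0,\mathrm{Func})$ with $L=(x_0,\dots,x_{k-1})$), the last permutation it produces is $(x_1,x_0,x_2,x_3,\dots,x_{k-1})$. Then, when $\mathrm{Permutations}$ is run on the list $(0,1,2,\dots,k)$ of $k+1$ elements, each of the $k+1$ elements is inserted exactly once at the beginning of the list (i.e. the $k+1$ recursive calls $\mathrm{Permutations}(L,1,\mathrm{Func})$ made by the top-level invocation are made with pairwise distinct elements at position $0$), and the last permutation produced is $(1,4,3,5,6,7,8,\dots,k,2,0)$.
   Context: Lists are 0-indexed. For a list $L$, $\mathrm{extract}(L,j)$ removes the element at position $j$ from $L$ and returns it; $\mathrm{Insert}(L,i,x)$ inserts $x$ into $L$ so that it occupies position $i$, shifting the elements previously at positions $\ge i$ one step to the right. Each combined operation $\mathrm{Insert}(L,i,\mathrm{extract}(L,j))$ first extracts, then inserts, so the length of $L$ is unchanged. The recursive procedure $\mathrm{Permutations}(L,i,\mathrm{Func})$ (with $\mathrm{Func}$ a callback) is: let $n=\mathrm{length}(L)$. If $i\ge n-1$, call $\mathrm{Func}(L)$. Otherwise: (1) call $\mathrm{Permutations}(L,i+1,\mathrm{Func})$; (2) do $\mathrm{Insert}(L,i,\mathrm{extract}(L,i+1))$ and call $\mathrm{Permutations}(L,i+1,\mathrm{Func})$; (3) repeat $\max(n-i-3,0)$ times: if $n-i$ is even, do $\mathrm{Insert}(L,i,\mathrm{extract}(L,n-1))$,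 otherwise do $\mathrm{Insert}(L,i,\mathrm{extract}(L,i+1))$; then call $\mathrm{Permutations}(L,i+1,\mathrm{Func})$; (4) if $n-i>2$: do $\mathrm{Insert}(L,i,\mathrm{extract}(L,i+1))$ and call $\mathrm{Permutations}(L,i+1,\mathrm{Func})$. The main call is $\mathrm{Permutations}(L,0,\mathrm{Func})$; each list passed to $\mathrm{Func}$ is a "produced permutation". A call $\mathrm{Permutations}(L,i,\mathrm{Func})$ modifies only positions $\ge i$, and its effect on that suffix depends only on the suffix length $n-i$. The "last permutation produced" when run on a list is the state of the list when the main call returns (which equals the argument of the last call to $\mathrm{Func}$). *)

theory Defs
  imports Main
begin

definition extract_rest :: "'a list \<Rightarrow> nat \<Rightarrow> 'a list" where
  "extract_rest L j = take j L @ drop (Suc j) L"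

definition insert_at :: "'a list \<Rightarrow> nat \<Rightarrow> 'a \<Rightarrow> 'a list" where
  "insert_at L i x = take i L @ x # drop i L"

definition mv :: "nat \<Rightarrow> nat \<Rightarrow> 'a list \<Rightarrow> 'a list" where
  "mv i j L = insert_at (extract_rest L j) i (L ! j)"

definition step3_idx :: "nat \<Rightarrow> nat \<Rightarrow> nat" where
  "step3_idx n i = (if even (n - i) then n - 1 else i + 1)"

text \<open>perm n i L: the state of the list after Permutations(L,i,Func) returns,
  where n is the (invariant) length of the list.  The condition i \<ge> n-1 (integers)
  is written as n \<le> Suc i.\<close>
function perm :: "nat \<Rightarrow> nat \<Rightarrow> 'a list \<Rightarrow> 'a list" where
  "perm n i L =
    (if n \<le> Suc i then L
     else
      (let L1 = perm n (Suc i) L;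
           L2 = perm n (Suc i) (mv i (Suc i) L1);
           L3 = foldl (\<lambda>A _. perm n (Suc i) (mv i (step3_idx n i) A)) L2
                  [0..<(n - i - 3)];
           L4 = (if n - i > 2 then perm n (Suc i) (mv i (Suc i) L3) else L3)
       in L4))"
  by pat_completeness auto
termination
  by (relation "measure (\<lambda>(n, i, L). n - i)") auto

text \<open>The list states with which Permutations(L,i+1,Func) is called directly by
  Permutations(L,i,Func), in order.\<close>
definition calls :: "nat \<Rightarrow> nat \<Rightarrow> 'a list \<Rightarrow> 'a list list" where
  "calls n i L =
    (if n \<le> Suc i then []
     else
      (let L1 = perm n (Suc i) L;
           S2 = mv i (Suc i) L1;
           L2 = perm n (Suc i) S2;
           f = (\<lambda>A. perm n (Suc i) (mv i (step3_idx n i) A));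
           S3 = map (\<lambda>j. mv i (step3_idx n i) (foldl (\<lambda>A _. f A) L2 [0..<j]))
                  [0..<(n - i - 3)];
           L3 = foldl (\<lambda>A _. f A) L2 [0..<(n - i - 3)];
           S4 = (if n - i > 2 then [mv i (Suc i) L3] else [])
       in [L, S2] @ S3 @ S4))"

end

theory Submission
  imports Defs
begin

text \<open>For n = k + 1 even, step (3) of the top-level call always moves the last entry to the
  front, and by the hypothesis every inner call Permutations(L,1) merely swaps the entries at
  positions 1 and 2. After its first two inner calls the top level is at (2,1,0,3,...,k); then it repeatedly
  rotates the last entry to the front and swaps positions 1 and 2, which maps the state
  (m,1,m+1,...,k,2,0,3,...,m-1) to the same pattern with m - 1 in place of m. Following this
  from m = k down to m = 3 yields both the heads 0, 2, k, k-1, ..., 3, 1 of the inner calls and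
  the final permutation.\<close>

declare perm.simps[simp del]

lemma mv_Cons: "mv (Suc i) (Suc j) (x # L) = x # mv i j L"
  by (simp add: mv_def insert_at_def extract_rest_def)

lemma mv_0_1: "mv 0 1 (x # y # L) = y # x # L"
  by (simp add: mv_def insert_at_def extract_rest_def)

lemma mv_0_snoc: "length L = j \<Longrightarrow> mv 0 j (L @ [x]) = x # L"
  by (simp add: mv_def insert_at_def extract_rest_def nth_append)

lemma hd_mv_0: "hd (mv 0 j L) = L ! j"
  by (simp add: mv_def insert_at_def)

lemma step3_idx_Suc: "Suc i < n \<Longrightarrow> step3_idx (Suc n) (Suc i) = Suc (step3_idx n i)"
  by (simp add: step3_idx_def)

lemma foldl_ignore_eq_funpow: "foldl (\<lambda>a _. f a) x xs = (f ^^ length xs) x"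
  by (induction xs rule: rev_induct) simp_all

lemma perm_Cons: "perm (Suc n) (Suc i) (x # L) = x # perm n i L"
proof (induction "n - i" arbitrary: i L x rule: less_induct)
  case less
  show ?case
  proof (cases "n \<le> Suc i")
    case True
    then show ?thesis by (subst (1 2) perm.simps) simp
  next
    case False
    have "n - Suc i < n - i"
      using False by simp
    note IH = less(1)[OF this]
    have foldl_Cons: "foldl (\<lambda>A _. perm (Suc n) (Suc (Suc i)) (mv (Suc i) (step3_idx (Suc n) (Suc i)) A))
            (y # B) xs
          = y # foldl (\<lambda>A _. perm n (Suc i) (mv i (step3_idx n i) A)) B xs"
      for xs and B :: "'a list" and y
      using False by (induction xs arbitrary: B) (simp_all add: IH mv_Cons step3_idx_Suc)
    from False show ?thesis
      by (subst (1 2) perm.simps) (simp add: Let_def IH mv_Cons foldl_Cons)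
  qed
qed

lemma perm_0_even:
  assumes "even n" and "3 \<le> n"
  defines "g \<equiv> \<lambda>A. perm n 1 (mv 0 (n - 1) A)"
  shows "perm n 0 L = perm n 1 (mv 0 1 ((g ^^ (n - 3)) (perm n 1 (mv 0 1 (perm n 1 L)))))"
  using assms by (subst perm.simps) (simp add: Let_def step3_idx_def foldl_ignore_eq_funpow)

lemma calls_0_even:
  fixes L :: "'a list"
  assumes "even n" and "3 \<le> n"
  defines "g \<equiv> \<lambda>A. perm n 1 (mv 0 (n - 1) A)"
    and "L2 \<equiv> perm n 1 (mv 0 1 (perm n 1 L))"
  shows "calls n 0 L = [L, mv 0 1 (perm n 1 L)]
           @ map (\<lambda>j. mv 0 (n - 1) ((g ^^ j) L2)) [0..<n - 3] @ [mv 0 1 ((g ^^ (n - 3)) L2)]"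
  using assms by (simp add: calls_def Let_def step3_idx_def foldl_ignore_eq_funpow)

locale perm_swaps_first_two =
  fixes k :: nat
  assumes odd_k: "odd k" and k_gt_4: "4 < k"
    and perm_k: "\<And>xs :: nat list. length xs = k \<Longrightarrow> distinct xs \<Longrightarrow>
                   perm k 0 xs = xs ! 1 # xs ! 0 # drop 2 xs"
begin

lemma perm_1_swap:
  fixes x y z :: nat
  assumes "distinct (x # y # z # R)" and "length R = k - 2"
  shows "perm (k + 1) 1 (x # y # z # R) = x # z # y # R"
  using perm_Cons[of k 0 x "y # z # R"] perm_k[of "y # z # R"] assms k_gt_4 by simp

definition rotate_step :: "nat list \<Rightarrow> nat list" where
  "rotate_step A = perm (k + 1) 1 (mv 0 k A)"

definition stage :: "nat \<Rightarrow> nat list" where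
  "stage m = m # 1 # [m + 1..<k + 1] @ 2 # 0 # [3..<m]"

lemma stage_snoc:
  assumes "4 \<le> m" and "m \<le> k"
  shows "stage m = (m # 1 # [m + 1..<k + 1] @ 2 # 0 # [3..<m - 1]) @ [m - 1]"
proof -
  have "[3..<m] = [3..<m - 1] @ [m - 1]"
    using assms upt_Suc_append[of 3 "m - 1"] by simp
  then show ?thesis by (simp add: stage_def)
qed

lemma length_stage_butlast:
  "4 \<le> m \<Longrightarrow> m \<le> k \<Longrightarrow> length (m # 1 # [m + 1..<k + 1] @ 2 # 0 # [3..<m - 1]) = k"
  using k_gt_4 by auto

lemma stage_nth_k: "4 \<le> m \<Longrightarrow> m \<le> k \<Longrightarrow> stage m ! k = m - 1"
  by (metis stage_snoc length_stage_butlast nth_append_length)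

lemma rotate_step_stage:
  assumes "4 \<le> m" and "m \<le> k"
  shows "rotate_step (stage m) = stage (m - 1)"
proof -
  have "rotate_step (stage m) = perm (k + 1) 1 ((m - 1) # m # 1 # [m + 1..<k + 1] @ 2 # 0 # [3..<m - 1])"
    unfolding rotate_step_def stage_snoc[OF assms] mv_0_snoc[OF length_stage_butlast[OF assms]] ..
  also have "\<dots> = (m - 1) # 1 # m # [m + 1..<k + 1] @ 2 # 0 # [3..<m - 1]"
    using assms k_gt_4 by (intro perm_1_swap) auto
  also have "\<dots> = stage (m - 1)"
    using assms by (simp add: stage_def upt_conv_Cons)
  finally show ?thesis .
qed

lemma upt_0_k: "[0..<k + 1] = 0 # 1 # 2 # [3..<k + 1]"
  using k_gt_4
  by (simp add: upt_rec[of 0] upt_rec[of "Suc 0"] upt_rec[of "Suc (Suc 0)"] numeral_2_eq_2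
      numeral_3_eq_3)

lemma first_call: "perm (k + 1) 1 [0..<k + 1] = 0 # 2 # 1 # [3..<k + 1]"
  unfolding upt_0_k using k_gt_4 by (intro perm_1_swap) auto

lemma second_call: "perm (k + 1) 1 (mv 0 1 (perm (k + 1) 1 [0..<k + 1])) = 2 # 1 # 0 # [3..<k + 1]"
  unfolding first_call mv_0_1 using k_gt_4 by (intro perm_1_swap) auto

lemma second_call_snoc: "2 # 1 # 0 # [3..<k + 1] = (2 # 1 # 0 # [3..<k]) @ [k]"
  using k_gt_4 by simp

lemma length_second_call_butlast: "length (2 # 1 # 0 # [3..<k]) = k"
  using k_gt_4 by simp

lemma second_call_nth_k: "(2 # 1 # 0 # [3..<k + 1]) ! k = k"
  unfolding second_call_snoc by (metis length_second_call_butlast nth_append_length)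

lemma rotate_step_second_call: "rotate_step (2 # 1 # 0 # [3..<k + 1]) = stage k"
proof -
  have "rotate_step (2 # 1 # 0 # [3..<k + 1]) = perm (k + 1) 1 (k # 2 # 1 # 0 # [3..<k])"
    unfolding rotate_step_def second_call_snoc mv_0_snoc[OF length_second_call_butlast] ..
  also have "\<dots> = stage k"
    using k_gt_4 by (subst perm_1_swap) (auto simp: stage_def)
  finally show ?thesis .
qed

lemma rotate_step_iterate:
  "j \<le> k - 3 \<Longrightarrow> (rotate_step ^^ Suc j) (2 # 1 # 0 # [3..<k + 1]) = stage (k - j)"
proof (induction j)
  case 0
  then show ?case using rotate_step_second_call by simp
next
  case (Suc j)
  then have "(rotate_step ^^ Suc (Suc j)) (2 # 1 # 0 # [3..<k + 1]) = rotate_step (stage (k - j))"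
    by simp
  also have "\<dots> = stage (k - Suc j)"
    using Suc.prems k_gt_4 rotate_step_stage[of "k - j"] by simp
  finally show ?case .
qed

lemma last_state_of_step3: "(rotate_step ^^ (k - 2)) (2 # 1 # 0 # [3..<k + 1]) = stage 3"
proof -
  have "k - 2 = Suc (k - 3)" and "k - (k - 3) = 3"
    using k_gt_4 by simp_all
  with rotate_step_iterate[of "k - 3"] show ?thesis by (metis le_refl)
qed

lemma perm_top_unfold:
  "perm (k + 1) 0 L
     = perm (k + 1) 1 (mv 0 1 ((rotate_step ^^ (k - 2)) (perm (k + 1) 1 (mv 0 1 (perm (k + 1) 1 L)))))"
  using perm_0_even[of "k + 1" L] odd_k k_gt_4 by (simp add: rotate_step_def[abs_def])

lemma calls_top_unfold:
  fixes L :: "nat list"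
  defines "L2 \<equiv> perm (k + 1) 1 (mv 0 1 (perm (k + 1) 1 L))"
  shows "calls (k + 1) 0 L = [L, mv 0 1 (perm (k + 1) 1 L)]
           @ map (\<lambda>j. mv 0 k ((rotate_step ^^ j) L2)) [0..<k - 2]
           @ [mv 0 1 ((rotate_step ^^ (k - 2)) L2)]"
  using calls_0_even[of "k + 1" L] odd_k k_gt_4 by (simp add: L2_def rotate_step_def[abs_def])

lemma last_call: "mv 0 1 (stage 3) = 1 # 3 # 4 # [5..<k + 1] @ [2, 0]"
proof -
  have "[3 + 1..<k + 1] = 4 # [5..<k + 1]"
    using k_gt_4 by (simp add: upt_rec[of 4])
  then show ?thesis
    unfolding stage_def by (simp only: upt_conv_Nil[OF le_refl] append_Cons mv_0_1)
qed

lemma perm_top_level: "perm (k + 1) 0 [0..<k + 1] = [1, 4, 3] @ [5..<k + 1] @ [2, 0]"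
proof -
  have "perm (k + 1) 0 [0..<k + 1] = perm (k + 1) 1 (1 # 3 # 4 # [5..<k + 1] @ [2, 0])"
    by (simp only: perm_top_unfold second_call last_state_of_step3 last_call)
  also have "\<dots> = [1, 4, 3] @ [5..<k + 1] @ [2, 0]"
    using k_gt_4 by (subst perm_1_swap) auto
  finally show ?thesis .
qed

lemma map_hd_calls:
  "map hd (calls (k + 1) 0 [0..<k + 1]) = 0 # 2 # map (\<lambda>j. k - j) [0..<k - 2] @ [1]"
proof -
  have heads_step3: "hd (mv 0 k ((rotate_step ^^ j) (2 # 1 # 0 # [3..<k + 1]))) = k - j"
    if "j < k - 2" for j
  proof (cases j)
    case 0
    then show ?thesis by (simp only: funpow_0 id_apply hd_mv_0 second_call_nth_k diff_zero)
  next
    case (Suc i)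
    then show ?thesis
      using that rotate_step_iterate[of i] stage_nth_k[of "k - i"] k_gt_4 by (simp add: hd_mv_0)
  qed
  have "map hd (calls (k + 1) 0 [0..<k + 1])
      = hd [0..<k + 1] # hd (mv 0 1 (perm (k + 1) 1 [0..<k + 1]))
        # map (\<lambda>j. hd (mv 0 k ((rotate_step ^^ j) (2 # 1 # 0 # [3..<k + 1])))) [0..<k - 2]
        @ [hd (mv 0 1 (stage 3))]"
    by (simp only: calls_top_unfold second_call last_state_of_step3 list.map map_append map_map
        comp_def append_Cons append_Nil)
  also have "map (\<lambda>j. hd (mv 0 k ((rotate_step ^^ j) (2 # 1 # 0 # [3..<k + 1])))) [0..<k - 2]
      = map (\<lambda>j. k - j) [0..<k - 2]"
    by (rule map_cong[OF refl]) (metis atLeastLessThan_iff set_upt heads_step3)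
  also have "hd [0..<k + 1] # hd (mv 0 1 (perm (k + 1) 1 [0..<k + 1]))
        # map (\<lambda>j. k - j) [0..<k - 2] @ [hd (mv 0 1 (stage 3))]
      = 0 # 2 # map (\<lambda>j. k - j) [0..<k - 2] @ [1]"
    unfolding first_call mv_0_1 last_call by (simp only: upt_0_k list.sel)
  finally show ?thesis .
qed

end

theorem lemma1:
  fixes k :: nat
  assumes "odd k" and "k > 4"
    and "\<forall>xs :: nat list. length xs = k \<longrightarrow> distinct xs \<longrightarrow>
           perm k 0 xs = xs ! 1 # xs ! 0 # drop 2 xs"
  shows "length (calls (k + 1) 0 [0..<k + 1]) = k + 1
         \<and> distinct (map hd (calls (k + 1) 0 [0..<k + 1]))
         \<and> perm (k + 1) 0 [0..<k + 1] = [1, 4, 3] @ [5..<k + 1] @ [2, 0]"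
proof -
  interpret perm_swaps_first_two k
    using assms by unfold_locales auto
  have "length (calls (k + 1) 0 [0..<k + 1]) = length (map hd (calls (k + 1) 0 [0..<k + 1]))"
    by (rule length_map[symmetric])
  also have "\<dots> = k + 1"
    unfolding map_hd_calls using k_gt_4 by simp
  finally have "length (calls (k + 1) 0 [0..<k + 1]) = k + 1" .
  moreover have "distinct (map hd (calls (k + 1) 0 [0..<k + 1]))"
    unfolding map_hd_calls by (auto simp: distinct_map inj_on_def)
  ultimately show ?thesis
    using perm_top_level by simp
qed

end
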